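(* Let $a>0$, $\beta>0$, let $\lambda$ be feasible, and let $C_1>25$. Then there exists $0<\delta_g(\beta,\lambda,C_1)\le\delta_\mu(\beta,\lambda)$ such that for every $0<\delta\le\delta_g$ and every real $k\ge k_0(\delta)$, \[ |g|^2\le C_1\delta^2 . \]
   Context: For $0<\delta<1$ and constants $\beta>0$, $\lambda\in\mathbb{R}$, put $\mu=\delta+\lambda\delta^{\beta}$. The constant $\lambda$ is called feasible if $\lambda>0$ when $0<\beta<1$, $\lambda\ge -1$ when $\beta=1$, and $\lambda\neq 0$ when $\beta>1$. For feasible $\lambda$, $\delta_\mu=\delta_\mu(\beta,\lambda)\in(0,1)$ denotes a number such that $\mu\ge 0$ for all $0<\delta\le\delta_\mu$. For $k\in\mathbb{R}$ define \[ g=g(k,\delta)=\mathrm{i}\delta\left[1-\frac{(\delta+2\mathrm{i})(2\mathrm{i}-\lambda\delta^{\beta})}{\delta(2\delta+\lambda\delta^{\beta})}\mathrm{e}^{-2|k|a}\right], \qquad k_0(\delta)=\frac{1}{2a}\ln\!\left(\frac{1}{2\delta^2+\lambda\delta^{\beta+1}}\right). \] *)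

theory Defs
  imports "HOL-Analysis.Analysis"
begin

definition feasible :: "real \<Rightarrow> real \<Rightarrow> bool" where
  "feasible beta lam \<longleftrightarrow>
     (beta < 1 \<longrightarrow> lam > 0) \<and> (beta = 1 \<longrightarrow> lam \<ge> -1) \<and> (beta > 1 \<longrightarrow> lam \<noteq> 0)"

definition mu :: "real \<Rightarrow> real \<Rightarrow> real \<Rightarrow> real" where
  "mu beta lam \<delta> = \<delta> + lam * \<delta> powr beta"

definition is_delta_mu :: "real \<Rightarrow> real \<Rightarrow> real \<Rightarrow> bool" where
  "is_delta_mu beta lam d \<longleftrightarrow> 0 < d \<and> d < 1 \<and> (\<forall>\<delta>. 0 < \<delta> \<and> \<delta> \<le> d \<longrightarrow> mu beta lam \<delta> \<ge> 0)"

definition g :: "real \<Rightarrow> real \<Rightarrow> real \<Rightarrow> real \<Rightarrow> real \<Rightarrow> complex" where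
  "g a beta lam k \<delta> = \<i> * of_real \<delta> *
     (1 - ((of_real \<delta> + 2 * \<i>) * (2 * \<i> - of_real (lam * \<delta> powr beta)))
            / of_real (\<delta> * (2 * \<delta> + lam * \<delta> powr beta))
          * of_real (exp (- 2 * \<bar>k\<bar> * a)))"

definition k0 :: "real \<Rightarrow> real \<Rightarrow> real \<Rightarrow> real \<Rightarrow> real" where
  "k0 a beta lam \<delta> = (1 / (2 * a)) * ln (1 / (2 * \<delta>\<^sup>2 + lam * \<delta> powr (beta + 1)))"

end

theory Submission
  imports Defs
begin

text \<open>
  The exponential factor in \<open>g\<close> is \<open>E = exp (-2\<bar>k\<bar>a)\<close> and its denominator is
  \<open>D = 2\<delta>\<^sup>2 + \<lambda>\<delta>\<^bsup>\<beta>+1\<^esup> = 1 / exp (2 a k\<^sub>0)\<close>, so \<open>k \<ge> k\<^sub>0\<close> gives \<open>0 \<le> E/D \<le> 1\<close> and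
  \<open>|g| \<le> \<delta> (1 + |z|)\<close> with \<open>z = (\<delta> + 2i)(2i - \<lambda>\<delta>\<^sup>\<beta>)\<close>. As \<open>\<delta> \<rightarrow> 0\<^sup>+\<close> we have \<open>z \<rightarrow> -4\<close>,
  so \<open>1 + |z| < \<surd>C\<^sub>1\<close> for small \<open>\<delta>\<close> precisely because \<open>C\<^sub>1 > 25\<close>.
\<close>

definition g_coeff :: "real \<Rightarrow> real \<Rightarrow> real \<Rightarrow> complex" where
  "g_coeff beta lam \<delta> = (of_real \<delta> + 2 * \<i>) * (2 * \<i> - of_real (lam * \<delta> powr beta))"

lemma tendsto_g_coeff:
  assumes "beta > 0"
  shows "(g_coeff beta lam \<longlongrightarrow> -4) (at_right 0)"
proof -
  have "((\<lambda>\<delta>::real. \<delta> powr beta) \<longlongrightarrow> 0) (at_right 0)"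
    using assms by (intro tendsto_zero_powrI) (auto simp: eventually_at_right_field intro: tendsto_ident_at)
  moreover have "((\<lambda>\<delta>. complex_of_real \<delta>) \<longlongrightarrow> 0) (at_right 0)"
    using tendsto_of_real[OF tendsto_ident_at[of 0 "{0<..}"]] by simp
  ultimately have "(g_coeff beta lam \<longlongrightarrow> (0 + 2 * \<i>) * (2 * \<i> - of_real (lam * 0))) (at_right 0)"
    unfolding g_coeff_def by (intro tendsto_intros)
  then show ?thesis by simp
qed

lemma exp_le_of_k0_le:
  fixes a D k :: real
  assumes "a > 0" "D > 0" "(1 / (2 * a)) * ln (1 / D) \<le> k"
  shows "exp (- 2 * \<bar>k\<bar> * a) \<le> D"
proof -
  have "ln (1 / D) \<le> 2 * a * k"
    using assms(1,3) by (simp add: field_simps)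
  also have "\<dots> \<le> 2 * \<bar>k\<bar> * a"
    using assms(1) by (simp add: mult_left_mono)
  finally have "ln (1 / D) \<le> 2 * \<bar>k\<bar> * a" .
  then have "exp (- 2 * \<bar>k\<bar> * a) \<le> exp (- ln (1 / D))"
    by simp
  also have "\<dots> = D"
    using \<open>D > 0\<close> by (simp add: ln_div exp_minus)
  finally show ?thesis .
qed

lemma norm_damped_le:
  fixes d q :: real and z :: complex
  assumes "d \<ge> 0" "0 \<le> q" "q \<le> 1"
  shows "cmod (\<i> * of_real d * (1 - z * of_real q)) \<le> d * (1 + cmod z)"
proof -
  have "cmod (1 - z * of_real q) \<le> 1 + cmod z * q"
    using norm_triangle_ineq4[of 1 "z * of_real q"] assms by (simp add: norm_mult)
  also have "\<dots> \<le> 1 + cmod z"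
    using assms by (simp add: mult_left_le)
  finally show ?thesis
    using assms by (simp add: norm_mult mult_left_mono)
qed

lemma norm_g_le:
  assumes "a > 0" "\<delta> > 0" "mu beta lam \<delta> \<ge> 0" "k0 a beta lam \<delta> \<le> k"
  shows "cmod (g a beta lam k \<delta>) \<le> \<delta> * (1 + cmod (g_coeff beta lam \<delta>))"
proof -
  define D where "D = \<delta> * (2 * \<delta> + lam * \<delta> powr beta)"
  define E where "E = exp (- 2 * \<bar>k\<bar> * a)"
  have "D > 0"
    using assms(2,3) unfolding D_def mu_def by (simp add: add_pos_nonneg)
  have "2 * \<delta>\<^sup>2 + lam * \<delta> powr (beta + 1) = D"
    using assms(2) unfolding D_def by (simp add: powr_add power2_eq_square algebra_simps)
  then have "E \<le> D"
    using assms(1,4) \<open>D > 0\<close> unfolding E_def k0_def by (intro exp_le_of_k0_le) auto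
  have "g a beta lam k \<delta> = \<i> * of_real \<delta> * (1 - g_coeff beta lam \<delta> * of_real (E / D))"
    unfolding g_def g_coeff_def E_def D_def by simp
  also have "cmod \<dots> \<le> \<delta> * (1 + cmod (g_coeff beta lam \<delta>))"
    using assms(2) \<open>D > 0\<close> \<open>E \<le> D\<close> unfolding E_def by (intro norm_damped_le) auto
  finally show ?thesis .
qed

theorem lemma4p1:
  fixes a beta lam C1 d_mu :: real
  assumes "a > 0" and "beta > 0" and "feasible beta lam" and "C1 > 25"
    and "is_delta_mu beta lam d_mu"
  shows "\<exists>dg. 0 < dg \<and> dg \<le> d_mu \<and>
           (\<forall>\<delta> k. 0 < \<delta> \<and> \<delta> \<le> dg \<and> k \<ge> k0 a beta lam \<delta> \<longrightarrow>
              (cmod (g a beta lam k \<delta>))\<^sup>2 \<le> C1 * \<delta>\<^sup>2)"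
proof -
  have "sqrt C1 > 5"
    using assms(4) real_less_rsqrt by force
  moreover have "((\<lambda>\<delta>. cmod (g_coeff beta lam \<delta>)) \<longlongrightarrow> 4) (at_right 0)"
    using tendsto_norm[OF tendsto_g_coeff[OF assms(2)]] by simp
  ultimately have "\<forall>\<^sub>F \<delta> in at_right 0. cmod (g_coeff beta lam \<delta>) < sqrt C1 - 1"
    by (intro order_tendstoD) auto
  then obtain b where "b > 0" and small: "\<And>\<delta>. 0 < \<delta> \<Longrightarrow> \<delta> < b \<Longrightarrow> 1 + cmod (g_coeff beta lam \<delta>) < sqrt C1"
    unfolding eventually_at_right_field by force
  define dg where "dg = min d_mu (b / 2)"
  have "0 < dg"
    using assms(5) \<open>b > 0\<close> unfolding dg_def is_delta_mu_def by simp
  moreover have "(cmod (g a beta lam k \<delta>))\<^sup>2 \<le> C1 * \<delta>\<^sup>2"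
    if "0 < \<delta>" "\<delta> \<le> dg" "k0 a beta lam \<delta> \<le> k" for \<delta> k
  proof -
    have "mu beta lam \<delta> \<ge> 0"
      using assms(5) that unfolding dg_def is_delta_mu_def by auto
    moreover have "1 + cmod (g_coeff beta lam \<delta>) \<le> sqrt C1"
      using small[of \<delta>] that \<open>b > 0\<close> unfolding dg_def by simp
    ultimately have "cmod (g a beta lam k \<delta>) \<le> \<delta> * sqrt C1"
      using norm_g_le[OF assms(1) that(1) _ that(3)] that(1)
      by (meson mult_left_mono less_imp_le order_trans)
    then have "(cmod (g a beta lam k \<delta>))\<^sup>2 \<le> (\<delta> * sqrt C1)\<^sup>2"
      by (intro power_mono) simp_all
    also have "\<dots> = C1 * \<delta>\<^sup>2"
      using assms(4) by (simp add: power_mult_distrib)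
    finally show ?thesis .
  qed
  moreover have "dg \<le> d_mu"
    unfolding dg_def by simp
  ultimately show ?thesis
    by blast
qed

end
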